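(* Let $\alpha \ge 1$ and let $\mathcal{F}$ be a $k$-uniform hypergraph on $[n]$. Suppose that the transposition $(ij)$ of two vertices $i \neq j$ is an automorphism of $\mathcal{F}$. Let $\vec{w} \in \mathbb{R}^n$ with $\|\vec{w}\|_\alpha = 1$ and $w_t \ge 0$ for all $1 \le t \le n$. Define $\vec{w}'$ by $w'_i = w'_j = ((w_i^\alpha + w_j^\alpha)/2)^{1/\alpha}$ and $w'_t = w_t$ for $t \in [n]\setminus\{i,j\}$. Then $\tau_{\mathcal{F}}(\vec{w}',\dots,\vec{w}') \ge \tau_{\mathcal{F}}(\vec{w},\dots,\vec{w})$.
   Context: For a $k$-uniform hypergraph $\mathcal{F}$ on $[n]$ and $x\in\mathbb{R}^n$, $\tau_{\mathcal{F}}(x,\dots,x) = k!\sum_{\{i_1,\dots,i_k\}\in E(\mathcal{F})}x_{i_1}\cdots x_{i_k}$. $\|x\|_\alpha = (\sum_i|x_i|^\alpha)^{1/\alpha}$. *)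

theory Defs
  imports "HOL-Analysis.Analysis" "HOL-Combinatorics.Transposition"
begin

definition uniform_hypergraph :: "nat \<Rightarrow> nat \<Rightarrow> nat set set \<Rightarrow> bool" where
  "uniform_hypergraph k n F \<longleftrightarrow> (\<forall>e\<in>F. e \<subseteq> {1..n} \<and> card e = k)"

definition hypergraph_automorphism :: "nat set set \<Rightarrow> (nat \<Rightarrow> nat) \<Rightarrow> bool" where
  "hypergraph_automorphism F \<sigma> \<longleftrightarrow> (\<lambda>e. \<sigma> ` e) ` F = F"

text \<open>tau_F(x,...,x) = k! * sum over edges of the product of the coordinates.\<close>
definition tau :: "nat \<Rightarrow> nat set set \<Rightarrow> (nat \<Rightarrow> real) \<Rightarrow> real" where
  "tau k F x = fact k * (\<Sum>e\<in>F. \<Prod>t\<in>e. x t)"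

definition alpha_norm :: "nat \<Rightarrow> real \<Rightarrow> (nat \<Rightarrow> real) \<Rightarrow> real" where
  "alpha_norm n \<alpha> x = (\<Sum>t\<in>{1..n}. \<bar>x t\<bar> powr \<alpha>) powr (1 / \<alpha>)"

end

theory Submission
  imports Defs
begin

text \<open>
  Pairing each edge e with its image under the transposition \<sigma> = (i j), which is again an
  edge, turns \<tau>(w) into the average of the products over e of w and of w \<circ> \<sigma>. Splitting
  off the factors at i and j, each such average is bounded by the product for w', because
  the power mean m of w i and w j dominates their arithmetic mean (so 2 m \<ge> w i + w j)
  and therefore also their geometric mean (so m^2 \<ge> w i w j).
\<close>

lemma powr_midpoint_le:
  fixes a b p :: real
  assumes "a \<ge> 0" "b \<ge> 0" "p \<ge> 1"
  shows "((a + b) / 2) powr p \<le> (a powr p + b powr p) / 2"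
proof (cases "a > 0 \<and> b > 0")
  case True
  have "convex_on {0<..} (\<lambda>x. x powr p)"
    using powr_convex \<open>p \<ge> 1\<close> by blast
  from convex_onD[OF this, of "1/2" a b] True show ?thesis
    by (simp add: field_simps)
next
  case False
  \<comment> \<open>Convexity is only available on the open half-line; at the boundary one of the
      points is 0 and the claim reduces to (1/2) powr p \<le> 1/2.\<close>
  then obtain c where c: "c \<ge> 0" "{a, b} = {0, c}"
    using assms by force
  have "2 powr 1 \<le> (2 :: real) powr p"
    using \<open>p \<ge> 1\<close> by (intro powr_mono) auto
  then have "c powr p / 2 powr p \<le> c powr p / 2"
    by (intro divide_left_mono) auto
  then have "(c / 2) powr p \<le> c powr p / 2"
    using c(1) by (simp add: powr_divide)
  with c(2) \<open>p \<ge> 1\<close> show ?thesis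
    by (auto simp: doubleton_eq_iff)
qed

lemma arith_mean_le_power_mean:
  fixes a b p :: real
  assumes "a \<ge> 0" "b \<ge> 0" "p \<ge> 1"
  shows "(a + b) / 2 \<le> ((a powr p + b powr p) / 2) powr (1 / p)"
proof -
  have "(((a + b) / 2) powr p) powr (1 / p) \<le> ((a powr p + b powr p) / 2) powr (1 / p)"
    using assms powr_midpoint_le by (intro powr_mono2) auto
  then show ?thesis
    using assms by (simp add: powr_powr)
qed

lemma mult_le_square_if_sum_le:
  fixes a b m :: real
  assumes "a + b \<le> 2 * m" "a \<ge> 0" "b \<ge> 0"
  shows "a * b \<le> m * m"
proof -
  have "a * b \<le> ((a + b) / 2) * ((a + b) / 2)"
    using sum_squares_ge_zero[of "a - b" 0] by (simp add: algebra_simps power2_eq_square)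
  also have "\<dots> \<le> m * m"
    using assms by (intro mult_mono) auto
  finally show ?thesis .
qed

lemma prod_split_pair:
  assumes "finite e" "i \<noteq> j"
  shows "(\<Prod>t\<in>e. f t) =
    (if i \<in> e then f i else 1) * (if j \<in> e then f j else 1) * (\<Prod>t\<in>e - {i, j}. f t)"
proof -
  have "(\<Prod>t\<in>e. f t) = (\<Prod>t\<in>e \<inter> {i, j}. f t) * (\<Prod>t\<in>e - {i, j}. f t)"
    using \<open>finite e\<close> by (metis Diff_eq prod.Int_Diff)
  moreover have "(\<Prod>t\<in>e \<inter> {i, j}. f t) = (if i \<in> e then f i else 1) * (if j \<in> e then f j else 1)"
    using \<open>i \<noteq> j\<close> by (cases "i \<in> e"; cases "j \<in> e") (auto simp: Int_insert_right)
  ultimately show ?thesis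
    by simp
qed

lemma prod_transpose_average_le:
  fixes w :: "nat \<Rightarrow> real"
  assumes "finite e" "\<forall>t\<in>e. w t \<ge> 0" "i \<noteq> j"
    and "w i + w j \<le> 2 * m" "w i * w j \<le> m * m"
  shows "(\<Prod>t\<in>e. w t) + (\<Prod>t\<in>e. w (Transposition.transpose i j t)) \<le> 2 * (\<Prod>t\<in>e. (w(i := m, j := m)) t)"
proof -
  define R where "R = (\<Prod>t\<in>e - {i, j}. w t)"
  have "R \<ge> 0"
    unfolding R_def using assms(2) by (intro prod_nonneg) auto
  have "(\<Prod>t\<in>e - {i, j}. (w(i := m, j := m)) t) = R"
       "(\<Prod>t\<in>e - {i, j}. w (Transposition.transpose i j t)) = R"
    unfolding R_def by (auto intro: prod.cong)
  moreover have "R * w i + R * w j \<le> R * (2 * m)" "R * (w i * w j) \<le> R * (m * m)"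
    using mult_left_mono[OF assms(4) \<open>R \<ge> 0\<close>] mult_left_mono[OF assms(5) \<open>R \<ge> 0\<close>]
    by (simp_all add: algebra_simps)
  ultimately show ?thesis
    using assms(3)
    unfolding prod_split_pair[OF assms(1,3), of w] prod_split_pair[OF assms(1,3), of "w(i := m, j := m)"]
      prod_split_pair[OF assms(1,3), of "\<lambda>t. w (Transposition.transpose i j t)"] R_def[symmetric]
    by (cases "i \<in> e"; cases "j \<in> e") (auto simp: algebra_simps)
qed

lemma sum_prod_automorphism:
  assumes "hypergraph_automorphism F \<sigma>" "inj \<sigma>"
  shows "(\<Sum>e\<in>F. \<Prod>t\<in>e. f t) = (\<Sum>e\<in>F. \<Prod>t\<in>e. f (\<sigma> t))"
proof -
  have "inj_on (\<lambda>e. \<sigma> ` e) F"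
    using \<open>inj \<sigma>\<close> by (simp add: inj_on_def inj_image_eq_iff)
  have "(\<Sum>e\<in>F. \<Prod>t\<in>e. f t) = (\<Sum>e\<in>(\<lambda>e. \<sigma> ` e) ` F. \<Prod>t\<in>e. f t)"
    using assms(1) unfolding hypergraph_automorphism_def by simp
  also have "\<dots> = (\<Sum>e\<in>F. \<Prod>t\<in>\<sigma> ` e. f t)"
    using sum.reindex[OF \<open>inj_on (\<lambda>e. \<sigma> ` e) F\<close>] by simp
  also have "\<dots> = (\<Sum>e\<in>F. \<Prod>t\<in>e. f (\<sigma> t))"
    using \<open>inj \<sigma>\<close> by (intro sum.cong refl) (simp add: prod.reindex inj_on_subset)
  finally show ?thesis .
qed

theorem lemma11:
  fixes \<alpha> :: real and k n i j :: nat and F :: "nat set set" and w :: "nat \<Rightarrow> real"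
  assumes "\<alpha> \<ge> 1"
    and "uniform_hypergraph k n F"
    and "i \<in> {1..n}" and "j \<in> {1..n}" and "i \<noteq> j"
    and "hypergraph_automorphism F (Transposition.transpose i j)"
    and "alpha_norm n \<alpha> w = 1"
    and "\<forall>t\<in>{1..n}. w t \<ge> 0"
  shows "tau k F (w(i := ((w i powr \<alpha> + w j powr \<alpha>) / 2) powr (1 / \<alpha>),
                    j := ((w i powr \<alpha> + w j powr \<alpha>) / 2) powr (1 / \<alpha>)))
         \<ge> tau k F w"
proof -
  define m where "m = ((w i powr \<alpha> + w j powr \<alpha>) / 2) powr (1 / \<alpha>)"
  have "w i \<ge> 0" "w j \<ge> 0"
    using assms(3,4,8) by auto
  then have arith: "w i + w j \<le> 2 * m"
    using arith_mean_le_power_mean[of "w i" "w j" \<alpha>] \<open>\<alpha> \<ge> 1\<close> unfolding m_def by simp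
  then have geom: "w i * w j \<le> m * m"
    using \<open>w i \<ge> 0\<close> \<open>w j \<ge> 0\<close> by (rule mult_le_square_if_sum_le)
  have edges: "\<And>e. e \<in> F \<Longrightarrow> finite e \<and> (\<forall>t\<in>e. w t \<ge> 0)"
    using assms(2,8) unfolding uniform_hypergraph_def by (meson finite_atLeastAtMost finite_subset subsetD)
  have "2 * (\<Sum>e\<in>F. \<Prod>t\<in>e. w t)
        = (\<Sum>e\<in>F. (\<Prod>t\<in>e. w t) + (\<Prod>t\<in>e. w (Transposition.transpose i j t)))"
    using sum_prod_automorphism[OF assms(6) inj_transpose] by (simp add: sum.distrib)
  also have "\<dots> \<le> 2 * (\<Sum>e\<in>F. \<Prod>t\<in>e. (w(i := m, j := m)) t)"
    unfolding sum_distrib_left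
    using edges prod_transpose_average_le[OF _ _ \<open>i \<noteq> j\<close> arith geom] by (intro sum_mono) blast
  finally show ?thesis
    unfolding tau_def m_def[symmetric] by (intro mult_left_mono) auto
qed

end
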